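(* Let $n$ be a positive integer and let $G$ be a pure $(2n)$-sparse gapset of genus $g=3n+1$ with depth $q$. Then $q\le 4$.
   Context: A gapset is a finite set $G\subset\mathbb{N}=\{1,2,\dots\}$ such that whenever $z\in G$ and $z=x+y$ with $x,y\in\mathbb{N}$, then $x\in G$ or $y\in G$; its genus is $g=\#G$. Writing $G=\{\ell_1<\dots<\ell_g\}$: multiplicity $m(G)=\min\{s\in\mathbb{N}:s\notin G\}$; conductor $c(G)=\min\{s\in\mathbb{N}: s+t\notin G\ \forall t\in\mathbb{N}_0\}$; depth $q(G)=\lceil c(G)/m(G)\rceil$. $G$ is pure $\kappa$-sparse if $\ell_{i+1}-\ell_i\le\kappa$ for all $i$ with equality for some $i$. *)

theory Defs
  imports Complex_Main
begin

definition gapset :: "nat set \<Rightarrow> bool" where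
  "gapset G \<longleftrightarrow> finite G \<and> 0 \<notin> G \<and>
     (\<forall>z\<in>G. \<forall>x y. x \<ge> 1 \<and> y \<ge> 1 \<and> z = x + y \<longrightarrow> x \<in> G \<or> y \<in> G)"

definition genus :: "nat set \<Rightarrow> nat" where
  "genus G = card G"

definition multiplicity :: "nat set \<Rightarrow> nat" where
  "multiplicity G = (LEAST s. s \<ge> 1 \<and> s \<notin> G)"

definition conductor :: "nat set \<Rightarrow> nat" where
  "conductor G = (LEAST s. s \<ge> 1 \<and> (\<forall>t. s + t \<notin> G))"

definition depth :: "nat set \<Rightarrow> int" where
  "depth G = \<lceil>real (conductor G) / real (multiplicity G)\<rceil>"

definition pure_sparse :: "nat \<Rightarrow> nat set \<Rightarrow> bool" where
  "pure_sparse \<kappa> G \<longleftrightarrow>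
     (let l = sorted_list_of_set G in
       (\<forall>i. i + 1 < length l \<longrightarrow> l ! (i+1) - l ! i \<le> \<kappa>) \<and>
       (\<exists>i. i + 1 < length l \<and> l ! (i+1) - l ! i = \<kappa>))"

end

theory Submission
  imports Defs
begin

text \<open>A pure \<open>2n\<close>-sparse gapset has two consecutive gaps \<open>a < a + 2n\<close>; the \<open>2n - 1\<close>
  non-gaps between them would, if \<open>m < 2n\<close>, form a run of \<open>m\<close> consecutive non-gaps, after
  which adding \<open>m\<close> never produces a gap again, contradicting \<open>a + 2n \<in> G\<close>. Hence
  \<open>m \<ge> 2n\<close>, while the classical bound \<open>c \<le> 2g = 6n + 2 \<le> 8n\<close> gives \<open>c \<le> 4m\<close>.\<close>

lemma gapset_finite: "gapset G \<Longrightarrow> finite G"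
  unfolding gapset_def by blast

lemma gapset_nongap_add:
  assumes "gapset G" "x \<ge> 1" "y \<ge> 1" "x \<notin> G" "y \<notin> G"
  shows "x + y \<notin> G"
  using assms unfolding gapset_def by blast

lemma gapset_gap_less_twice_card:
  assumes "gapset G" "z \<in> G"
  shows "z < 2 * card G"
proof -
  have fin: "finite G" and z_pos: "z \<ge> 1"
    using assms unfolding gapset_def by (auto simp: Suc_le_eq intro: gr0I)
  define A where "A = G \<inter> {1..<z}"
  have "{1..<z} \<subseteq> A \<union> (\<lambda>x. z - x) ` A"
  proof
    fix x assume x: "x \<in> {1..<z}"
    then have "x \<in> G \<or> z - x \<in> G"
      using assms unfolding gapset_def by (metis atLeastLessThan_iff add_diff_inverse_nat
          less_imp_le_nat not_less_iff_gr_or_eq zero_less_diff Suc_leI One_nat_def)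
    moreover have "x = z - (z - x)" using x by auto
    ultimately show "x \<in> A \<union> (\<lambda>x. z - x) ` A"
      using x unfolding A_def by force
  qed
  then have "z - 1 \<le> card (A \<union> (\<lambda>x. z - x) ` A)"
    using card_mono[of "A \<union> (\<lambda>x. z - x) ` A" "{1..<z}"] by (simp add: A_def)
  also have "\<dots> \<le> 2 * card A"
    using card_Un_le[of A "(\<lambda>x. z - x) ` A"] card_image_le[of A "\<lambda>x. z - x"]
    by (simp add: A_def)
  also have "card A \<le> card (G - {z})"
    using fin by (intro card_mono) (auto simp: A_def)
  finally have "z - 1 \<le> 2 * (card G - 1)"
    using fin assms(2) by simp
  moreover have "card G \<ge> 1"
    using fin assms(2) by (simp add: Suc_le_eq card_gt_0_iff) blast
  ultimately show ?thesis using z_pos by linarith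
qed

lemma conductor_le_twice_genus:
  assumes "gapset G" "G \<noteq> {}"
  shows "conductor G \<le> 2 * genus G"
  unfolding conductor_def genus_def
proof (rule Least_le, intro conjI allI)
  show "1 \<le> 2 * card G"
    using assms gapset_finite by (simp add: Suc_leI card_gt_0_iff)
  show "2 * card G + t \<notin> G" for t
    using gapset_gap_less_twice_card[OF assms(1)] by fastforce
qed

lemma multiplicity_nongap:
  assumes "gapset G"
  shows "multiplicity G \<ge> 1" "multiplicity G \<notin> G"
proof -
  obtain s where "s \<notin> insert 0 G"
    using gapset_finite[OF assms] by (meson ex_new_if_finite finite_insert infinite_UNIV_nat)
  then have "\<exists>s. s \<ge> 1 \<and> s \<notin> G" by (metis insertCI less_one not_le)
  from LeastI_ex[OF this] show "multiplicity G \<ge> 1" "multiplicity G \<notin> G"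
    unfolding multiplicity_def by auto
qed

lemma no_gap_after_multiplicity_run:
  assumes "gapset G" and run: "\<And>x. a < x \<Longrightarrow> x \<le> a + multiplicity G \<Longrightarrow> x \<notin> G"
  shows "a < x \<Longrightarrow> x \<notin> G"
proof (induction x rule: less_induct)
  case (less x)
  let ?m = "multiplicity G"
  show ?case
  proof (cases "x \<le> a + ?m")
    case True
    then show ?thesis using run less.prems by blast
  next
    case False
    then have "x - ?m \<notin> G"
      using less.IH[of "x - ?m"] multiplicity_nongap[OF assms(1)] by simp
    moreover have "x = (x - ?m) + ?m" "x - ?m \<ge> 1" using False by auto
    ultimately show ?thesis
      using gapset_nongap_add[OF assms(1)] multiplicity_nongap[OF assms(1)] by metis
  qed
qed

lemma pure_sparse_consecutive_gaps:
  assumes "finite G" "pure_sparse \<kappa> G"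
  obtains a where "a \<in> G" "a + \<kappa> \<in> G" "\<And>x. a < x \<Longrightarrow> x < a + \<kappa> \<Longrightarrow> x \<notin> G"
proof -
  define l where "l = sorted_list_of_set G"
  obtain i where i: "i + 1 < length l" "l ! (i + 1) - l ! i = \<kappa>"
    using assms(2) unfolding pure_sparse_def l_def Let_def by blast
  have strict: "sorted_wrt (<) l" and set_l: "set l = G"
    using assms(1) unfolding l_def by simp_all
  then have next_elem: "l ! (i + 1) = l ! i + \<kappa>"
    using i by (metis add_diff_inverse_nat less_add_one not_less_iff_gr_or_eq
        order.strict_implies_order sorted_wrt_nth_less add.commute)
  have "x \<notin> G" if "l ! i < x" "x < l ! i + \<kappa>" for x
  proof
    assume "x \<in> G"
    then obtain j where "j < length l" "l ! j = x"
      using set_l by (metis in_set_conv_nth)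
    then show False
      using that i(1) next_elem strict sorted_wrt_nth_less[OF strict]
      by (metis Suc_eq_plus1 linorder_neqE_nat not_less_eq order.asym)
  qed
  moreover have "l ! i \<in> G" "l ! i + \<kappa> \<in> G"
    using i(1) set_l next_elem by (metis Suc_lessD add.commute nth_mem plus_1_eq_Suc)+
  ultimately show ?thesis using that by blast
qed

lemma pure_sparse_le_multiplicity:
  assumes "gapset G" "pure_sparse \<kappa> G"
  shows "\<kappa> \<le> multiplicity G"
proof (rule ccontr)
  assume "\<not> \<kappa> \<le> multiplicity G"
  obtain a where "a + \<kappa> \<in> G" "\<And>x. a < x \<Longrightarrow> x < a + \<kappa> \<Longrightarrow> x \<notin> G"
    using pure_sparse_consecutive_gaps[OF gapset_finite[OF assms(1)] assms(2)] by blast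
  with \<open>\<not> \<kappa> \<le> multiplicity G\<close> show False
    using no_gap_after_multiplicity_run[OF assms(1), of a "a + \<kappa>"] multiplicity_nongap[OF assms(1)]
    by fastforce
qed

lemma depth_le_of_conductor_le:
  assumes "multiplicity G \<ge> 1" "conductor G \<le> k * multiplicity G"
  shows "depth G \<le> int k"
proof -
  have "real (conductor G) / real (multiplicity G) \<le> real k"
    using assms by (simp add: divide_le_eq flip: of_nat_mult)
  then show ?thesis unfolding depth_def by (simp add: ceiling_le_iff)
qed

theorem mainTheorem15:
  fixes n :: nat and G :: "nat set"
  assumes "n \<ge> 1"
    and "gapset G"
    and "pure_sparse (2 * n) G"
    and "genus G = 3 * n + 1"
  shows "depth G \<le> 4"
proof -
  have "G \<noteq> {}" using assms(4) unfolding genus_def by auto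
  then have "conductor G \<le> 6 * n + 2"
    using conductor_le_twice_genus[OF assms(2)] assms(4) by simp
  also have "\<dots> \<le> 4 * multiplicity G"
    using pure_sparse_le_multiplicity[OF assms(2,3)] assms(1) by linarith
  finally show ?thesis
    using depth_le_of_conductor_le[of G 4] multiplicity_nongap[OF assms(2)] by simp
qed

end
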